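(* In the continuous Donation Game, let $\gamma\in\mathbb{R}$. Suppose there exist a bounded measurable $\psi:[0,K]\to\mathbb{R}$, a probability measure $\sigma_X^0$ on $[0,K]$ and a Markov kernel $\sigma_X[x,y]$ from $[0,K]^2$ to $[0,K]$ such that for all $x,y\in[0,K]$, $$u_Y(x,y)-\gamma=\psi(x)-\lambda\int\psi(s)\,d\sigma_X[x,y](s)-(1-\lambda)\int\psi(s)\,d\sigma_X^0(s).$$ Then $0\le\gamma\le b(K)-c(K)$.
   Context: Continuous Donation Game: fix $K>0$ and measurable nondecreasing functions $b,c:[0,K]\to\mathbb{R}$ with $b(0)=c(0)=0$ and $b(s)>c(s)$ for $s>0$. Action spaces $S_X=S_Y=[0,K]$, payoffs $u_X(x,y)=b(y)-c(x)$, $u_Y(x,y)=b(x)-c(y)$, discount factor $\lambda\in(0,1)$. *)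

theory Defs
  imports "HOL-Probability.Probability"
begin

definition act_space :: "real \<Rightarrow> real measure" where
  "act_space K = restrict_space borel {0..K}"

definition donation_game :: "real \<Rightarrow> (real \<Rightarrow> real) \<Rightarrow> (real \<Rightarrow> real) \<Rightarrow> bool" where
  "donation_game K b c \<longleftrightarrow> K > 0
     \<and> b \<in> borel_measurable (act_space K) \<and> c \<in> borel_measurable (act_space K)
     \<and> mono_on {0..K} b \<and> mono_on {0..K} c
     \<and> b 0 = 0 \<and> c 0 = 0
     \<and> (\<forall>s\<in>{0<..K}. b s > c s)"

definition u_X :: "(real \<Rightarrow> real) \<Rightarrow> (real \<Rightarrow> real) \<Rightarrow> real \<Rightarrow> real \<Rightarrow> real" where
  "u_X b c x y = b y - c x"

definition u_Y :: "(real \<Rightarrow> real) \<Rightarrow> (real \<Rightarrow> real) \<Rightarrow> real \<Rightarrow> real \<Rightarrow> real" where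
  "u_Y b c x y = b x - c y"

end

theory Submission
  imports Defs
begin

text \<open>
  Put \<open>M = sup psi\<close> and \<open>m = inf psi\<close> over \<open>[0,K]\<close>. The right-hand side of the equation is
  \<open>psi x\<close> minus a convex combination of two averages of \<open>psi\<close>, so it lies in \<open>[psi x - M, psi x - m]\<close>.
  With \<open>y = K\<close> and monotonicity of \<open>b\<close> this gives \<open>psi x \<le> M + (b K - c K) - gamma\<close> for all \<open>x\<close>,
  and taking the supremum over \<open>x\<close> yields \<open>gamma \<le> b K - c K\<close>; dually, \<open>y = 0\<close> and
  \<open>b x \<ge> b 0 = 0\<close> give \<open>psi x \<ge> m - gamma\<close>, whence \<open>gamma \<ge> 0\<close> after taking the infimum.
\<close>

lemma (in prob_space) integral_bounded_image_between_Inf_Sup: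
  fixes f :: "'a \<Rightarrow> real"
  assumes f: "f \<in> borel_measurable M" and bdd: "bounded (f ` space M)"
  shows "Inf (f ` space M) \<le> (\<integral>x. f x \<partial>M) \<and> (\<integral>x. f x \<partial>M) \<le> Sup (f ` space M)"
proof -
  obtain B where B: "\<And>x. x \<in> space M \<Longrightarrow> norm (f x) \<le> B"
    using bdd unfolding bounded_iff by blast
  have int: "integrable M f"
    using B by (intro integrable_const_bound[where B=B] AE_I2 f)
  have "bdd_above (f ` space M)" "bdd_below (f ` space M)"
    using bdd by (auto intro: bounded_imp_bdd_above bounded_imp_bdd_below)
  then show ?thesis
    by (intro conjI integral_ge_const[OF int] integral_le_const[OF int] AE_I2)
      (auto intro: cInf_lower cSup_upper)
qed

lemma space_act_space [simp]: "space (act_space K) = {0..K}"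
  by (simp add: act_space_def space_restrict_space)

lemma integral_act_space_between_Inf_Sup:
  fixes f :: "real \<Rightarrow> real"
  assumes f: "f \<in> borel_measurable (act_space K)" and bdd: "bounded (f ` {0..K})"
    and mu: "mu \<in> space (prob_algebra (act_space K))"
  shows "Inf (f ` {0..K}) \<le> (\<integral>s. f s \<partial>mu) \<and> (\<integral>s. f s \<partial>mu) \<le> Sup (f ` {0..K})"
proof -
  have sets: "sets mu = sets (act_space K)" and "prob_space mu"
    using mu by (auto simp: space_prob_algebra)
  interpret prob_space mu by fact
  have "space mu = {0..K}"
    using sets_eq_imp_space_eq[OF sets] by simp
  moreover have "f \<in> borel_measurable mu"
    using f measurable_cong_sets[OF sets refl] by blast
  ultimately show ?thesis
    using integral_bounded_image_between_Inf_Sup bdd by simp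
qed

lemma convex_combination_between:
  fixes a b x y t :: real
  assumes "a \<le> x" "x \<le> b" "a \<le> y" "y \<le> b" "0 \<le> t" "t \<le> 1"
  shows "a \<le> t * x + (1 - t) * y \<and> t * x + (1 - t) * y \<le> b"
  using convex_bound_le[of x b y t "1 - t"] convex_bound_le[of "- x" "- a" "- y" t "1 - t"] assms
  by auto

theorem mainTheorem14:
  fixes K lam gamma :: real and b c psi :: "real \<Rightarrow> real"
    and sigma0 :: "real measure" and sigma :: "real \<times> real \<Rightarrow> real measure"
  assumes game: "donation_game K b c"
    and lam: "0 < lam" "lam < 1"
    and psi_meas: "psi \<in> borel_measurable (act_space K)"
    and psi_bdd: "bounded (psi ` {0..K})"
    and sigma0: "sigma0 \<in> space (prob_algebra (act_space K))"
    and sigma_kernel: "sigma \<in> measurable (act_space K \<Otimes>\<^sub>M act_space K) (prob_algebra (act_space K))"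
    and eq: "\<And>x y. x \<in> {0..K} \<Longrightarrow> y \<in> {0..K} \<Longrightarrow>
       u_Y b c x y - gamma
         = psi x - lam * (\<integral>s. psi s \<partial>(sigma (x, y))) - (1 - lam) * (\<integral>s. psi s \<partial>sigma0)"
  shows "0 \<le> gamma \<and> gamma \<le> b K - c K"
proof -
  have K: "0 \<in> {0..K}" "K \<in> {0..K}" and b_mono: "mono_on {0..K} b" and "b 0 = 0" "c 0 = 0"
    using game by (auto simp: donation_game_def)
  define M where "M = Sup (psi ` {0..K})"
  define m where "m = Inf (psi ` {0..K})"
  define avg where "avg x y = lam * (\<integral>s. psi s \<partial>(sigma (x, y))) + (1 - lam) * (\<integral>s. psi s \<partial>sigma0)"
    for x y
  have avg_bounds: "m \<le> avg x y \<and> avg x y \<le> M" if "x \<in> {0..K}" "y \<in> {0..K}" for x y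
  proof -
    have "sigma (x, y) \<in> space (prob_algebra (act_space K))"
      using measurable_space[OF sigma_kernel, of "(x, y)"] that by (simp add: space_pair_measure)
    then have "m \<le> (\<integral>s. psi s \<partial>sigma (x, y)) \<and> (\<integral>s. psi s \<partial>sigma (x, y)) \<le> M"
      and "m \<le> (\<integral>s. psi s \<partial>sigma0) \<and> (\<integral>s. psi s \<partial>sigma0) \<le> M"
      using integral_act_space_between_Inf_Sup[OF psi_meas psi_bdd] sigma0
      unfolding M_def m_def by blast+
    then show ?thesis
      unfolding avg_def using lam by (intro convex_combination_between) auto
  qed
  have "psi x \<le> M + (b K - c K) - gamma" if "x \<in> {0..K}" for x
    using eq[OF that K(2)] avg_bounds[OF that K(2)] mono_onD[OF b_mono that K(2)] that
    by (auto simp: u_Y_def avg_def)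
  then have "M \<le> M + (b K - c K) - gamma"
    unfolding M_def by (intro cSup_least) (use K in auto)
  moreover have "m - gamma \<le> psi x" if "x \<in> {0..K}" for x
    using eq[OF that K(1)] avg_bounds[OF that K(1)] mono_onD[OF b_mono K(1) that] that
      \<open>b 0 = 0\<close> \<open>c 0 = 0\<close> by (auto simp: u_Y_def avg_def)
  then have "m - gamma \<le> m"
    unfolding m_def by (intro cInf_greatest) (use K in auto)
  ultimately show ?thesis by simp
qed

end
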